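(* Let $X$ be a Polish space, $g,h:X\to\mathbb R$ and $\varepsilon>0$. For every closed set $P$, \[\delta(gh,\varepsilon,P)\subseteq\delta_h(g,\tfrac{\varepsilon}{2},P)\cup\delta_g(h,\tfrac{\varepsilon}{2},P),\] and hence, for every countable ordinal $\alpha$, \[\delta^{\omega^\alpha}(gh,\varepsilon,P)\subseteq\delta_h^{\omega^\alpha}(g,\tfrac{\varepsilon}{2},P)\cup\delta_g^{\omega^\alpha}(h,\tfrac{\varepsilon}{2},P).\]
   Context: For real functions $u,v$ on $X$, $\eta>0$ and closed $P$, $O_u(v,\eta,P)$ is the set of $x\in P$ such that every open neighbourhood $U$ of $x$ contains some $y\in U\cap P$ with $|v(y)-v(x)|\,(|u(y)|\vee|u(x)|)\ge\eta$, and $\delta_u(v,\eta,P)=\overline{O_u(v,\eta,P)}$; with $u\equiv1$ this is written $\delta(v,\eta,P)$. Iterates of a derivation $P\mapsto\delta(P)$: $\delta^0(P)=P$, $\delta^{\alpha+1}(P)=\delta(\delta^\alpha(P))$, intersections at limit ordinals; $\delta_u^\alpha(v,\eta,P)$ denotes the $\alpha$-th iterate of $\delta_u(v,\eta,\cdot)$ applied to $P$. *)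

theory Defs
  imports "HOL-Analysis.Analysis"
begin

definition osc_set ::
  "('a::topological_space \<Rightarrow> real) \<Rightarrow> ('a \<Rightarrow> real) \<Rightarrow> real \<Rightarrow> 'a set \<Rightarrow> 'a set" where
  "osc_set u v \<eta> P =
     {x \<in> P. \<forall>U. open U \<and> x \<in> U \<longrightarrow>
        (\<exists>y \<in> U \<inter> P. \<bar>v y - v x\<bar> * max \<bar>u y\<bar> \<bar>u x\<bar> \<ge> \<eta>)}"

definition delta_u ::
  "('a::topological_space \<Rightarrow> real) \<Rightarrow> ('a \<Rightarrow> real) \<Rightarrow> real \<Rightarrow> 'a set \<Rightarrow> 'a set" where
  "delta_u u v \<eta> P = closure (osc_set u v \<eta> P)"

definition delta :: "('a::topological_space \<Rightarrow> real) \<Rightarrow> real \<Rightarrow> 'a set \<Rightarrow> 'a set" where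
  "delta v \<eta> P = delta_u (\<lambda>_. 1) v \<eta> P"

text \<open>Every countable ordinal is the value of some Brouwer tree and every tree
denotes a countable ordinal: Zero = 0, Succ a = a+1, Lim f = sup_n (f n).\<close>
datatype cord = Zero | Succ cord | Lim "nat \<Rightarrow> cord"

primrec nat_ord :: "nat \<Rightarrow> cord" where
  "nat_ord 0 = Zero"
| "nat_ord (Suc n) = Succ (nat_ord n)"

definition omega :: cord where "omega = Lim nat_ord"

primrec ord_add :: "cord \<Rightarrow> cord \<Rightarrow> cord" where
  "ord_add a Zero = a"
| "ord_add a (Succ b) = Succ (ord_add a b)"
| "ord_add a (Lim f) = Lim (\<lambda>n. ord_add a (f n))"

primrec ord_mult :: "cord \<Rightarrow> cord \<Rightarrow> cord" where
  "ord_mult a Zero = Zero"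
| "ord_mult a (Succ b) = ord_add (ord_mult a b) a"
| "ord_mult a (Lim f) = Lim (\<lambda>n. ord_mult a (f n))"

primrec omega_pow :: "cord \<Rightarrow> cord" where
  "omega_pow Zero = Succ Zero"
| "omega_pow (Succ b) = ord_mult (omega_pow b) omega"
| "omega_pow (Lim f) = Lim (\<lambda>n. omega_pow (f n))"

primrec iter :: "('a set \<Rightarrow> 'a set) \<Rightarrow> cord \<Rightarrow> 'a set \<Rightarrow> 'a set" where
  "iter D Zero P = P"
| "iter D (Succ a) P = D (iter D a P)"
| "iter D (Lim f) P = (\<Inter>n. iter D (f n) P)"

end

theory Submission
  imports Defs
begin

text \<open>
  The first inclusion is pointwise: from
  \<open>|g y h y - g x h x| \<le> |g y - g x| (|h y| \<or> |h x|) + |h y - h x| (|g y| \<or> |g x|)\<close>,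
  a point of \<open>P\<close> at which \<open>gh\<close> oscillates by \<open>\<epsilon>\<close> is a point at which one of the two
  summands oscillates by \<open>\<epsilon>/2\<close>.

  The second inclusion holds for any three derivations \<open>D \<subseteq> D\<^sub>1 \<union> D\<^sub>2\<close> that are monotone,
  deflationary and subadditive on closed sets, by induction on \<open>\<alpha>\<close>. Since
  \<open>\<omega>\<^bsup>\<beta>+1\<^esup> = sup\<^sub>n \<omega>\<^bsup>\<beta>\<^esup>\<cdot>n\<close>, the successor step is the finite statement
  \<open>E\<^bsup>m+n\<^esup> \<subseteq> E\<^sub>1\<^bsup>m\<^esup> \<union> E\<^sub>2\<^bsup>n\<^esup>\<close> for \<open>E = D\<^bsup>\<omega>\<^sup>\<beta>\<^esup>\<close>. At limits, and again
  when passing to the supremum, an intersection of unions has to be split; this works because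
  the iterates of every derivation decrease along one common (syntactic) order of the indices.
\<close>

definition derivation :: "('a::topological_space set \<Rightarrow> 'a set) \<Rightarrow> bool" where
  "derivation D \<longleftrightarrow>
     (\<forall>A B. A \<subseteq> B \<longrightarrow> D A \<subseteq> D B) \<and>
     (\<forall>P. closed P \<longrightarrow> closed (D P) \<and> D P \<subseteq> P) \<and>
     (\<forall>A B. closed A \<longrightarrow> closed B \<longrightarrow> D (A \<union> B) \<subseteq> D A \<union> D B)"

lemma derivationD:
  assumes "derivation D"
  shows derivation_mono: "A \<subseteq> B \<Longrightarrow> D A \<subseteq> D B"
    and derivation_closed: "closed P \<Longrightarrow> closed (D P)"
    and derivation_subset: "closed P \<Longrightarrow> D P \<subseteq> P"
    and derivation_Un_subset: "closed A \<Longrightarrow> closed B \<Longrightarrow> D (A \<union> B) \<subseteq> D A \<union> D B"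
  using assms unfolding derivation_def by simp_all

lemma derivationI:
  assumes "\<And>A B. A \<subseteq> B \<Longrightarrow> D A \<subseteq> D B"
    and "\<And>P. closed P \<Longrightarrow> closed (D P)"
    and "\<And>P. closed P \<Longrightarrow> D P \<subseteq> P"
    and "\<And>A B. closed A \<Longrightarrow> closed B \<Longrightarrow> D (A \<union> B) \<subseteq> D A \<union> D B"
  shows "derivation D"
  unfolding derivation_def using assms by simp

lemma iter_mono:
  assumes "derivation D" "A \<subseteq> B"
  shows "iter D a A \<subseteq> iter D a B"
proof (induction a)
  case (Succ a)
  then show ?case using derivation_mono[OF assms(1)] by simp
qed (use assms in auto)

lemma closed_iter_subset:
  assumes "derivation D" "closed P"
  shows "closed (iter D a P) \<and> iter D a P \<subseteq> P"
proof (induction a)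
  case (Succ a)
  then show ?case
    using derivation_closed[OF assms(1)] derivation_subset[OF assms(1), of "iter D a P"] by auto
qed (use assms in auto)

text \<open>
  \<open>cord_le a b\<close> and \<open>cord_less a b\<close> are a syntactic \<open>a \<le> b\<close> and \<open>a < b\<close> on Brouwer trees;
  they are total and sound for the iterates of every derivation at once.
\<close>

inductive cord_le :: "cord \<Rightarrow> cord \<Rightarrow> bool" and cord_less :: "cord \<Rightarrow> cord \<Rightarrow> bool" where
  "cord_le Zero b"
| "cord_less a b \<Longrightarrow> cord_le (Succ a) b"
| "(\<And>n. cord_le (f n) b) \<Longrightarrow> cord_le (Lim f) b"
| "cord_le a b \<Longrightarrow> cord_less a (Succ b)"
| "cord_less a (g n) \<Longrightarrow> cord_less a (Lim g)"

lemma iter_cord_le_cord_less: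
  assumes "derivation D" "closed P"
  shows "cord_le a b \<Longrightarrow> iter D b P \<subseteq> iter D a P"
    and "cord_less a b \<Longrightarrow> iter D b P \<subseteq> D (iter D a P)"
proof (induction rule: cord_le_cord_less.inducts)
  case (1 b)
  then show ?case using closed_iter_subset[OF assms] by simp
next
  case (4 a b)
  then show ?case using derivation_mono[OF assms(1)] by simp
qed auto

lemma cord_le_or_less: "(cord_le a b \<or> cord_less b a) \<and> (cord_le b a \<or> cord_less a b)"
proof (induction a arbitrary: b)
  case Zero
  show ?case
    by (induction b) (blast intro: cord_le_cord_less.intros)+
next
  case (Succ a)
  show ?case
    by (induction b) (use Succ.IH in \<open>blast intro: cord_le_cord_less.intros\<close>)+
next
  case (Lim f)
  show ?case
    by (induction b) (use Lim.IH in \<open>blast intro: cord_le_cord_less.intros\<close>)+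
qed

lemma iter_comparable:
  assumes "derivation D\<^sub>1" "derivation D\<^sub>2" "closed P\<^sub>1" "closed P\<^sub>2"
  shows "iter D\<^sub>1 b P\<^sub>1 \<subseteq> iter D\<^sub>1 a P\<^sub>1 \<or> iter D\<^sub>2 a P\<^sub>2 \<subseteq> iter D\<^sub>2 b P\<^sub>2"
proof -
  have strict: "iter D b P \<subseteq> iter D a P"
    if "cord_less a b" "derivation D" "closed P" for D :: "'a set \<Rightarrow> 'a set" and P a b
    using iter_cord_le_cord_less(2)[OF that(2,3) that(1)]
      derivation_subset[OF that(2) closed_iter_subset[OF that(2,3), THEN conjunct1]] by blast
  show ?thesis
    using cord_le_or_less[of a b] iter_cord_le_cord_less(1) strict assms by blast
qed

lemma INT_Un_subset_Un_INT:
  assumes "\<And>j k. A j \<subseteq> A k \<or> B k \<subseteq> B j"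
  shows "(\<Inter>n. A n \<union> B n) \<subseteq> (\<Inter>n. A n) \<union> (\<Inter>n. B n)"
proof
  fix x assume x: "x \<in> (\<Inter>n. A n \<union> B n)"
  show "x \<in> (\<Inter>n. A n) \<union> (\<Inter>n. B n)"
  proof (rule ccontr)
    assume "x \<notin> (\<Inter>n. A n) \<union> (\<Inter>n. B n)"
    then obtain k j where "x \<notin> A k" "x \<notin> B j" by auto
    then show False using assms[of j k] x by blast
  qed
qed

lemma INT_iter_Un_subset:
  assumes "derivation D\<^sub>1" "derivation D\<^sub>2" "closed P\<^sub>1" "closed P\<^sub>2"
  shows "(\<Inter>n. iter D\<^sub>1 (c n) P\<^sub>1 \<union> iter D\<^sub>2 (c n) P\<^sub>2)
           \<subseteq> (\<Inter>n. iter D\<^sub>1 (c n) P\<^sub>1) \<union> (\<Inter>n. iter D\<^sub>2 (c n) P\<^sub>2)"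
  by (rule INT_Un_subset_Un_INT) (rule iter_comparable[OF assms])

lemma iter_Un_subset:
  assumes "derivation D" "closed A" "closed B"
  shows "iter D a (A \<union> B) \<subseteq> iter D a A \<union> iter D a B"
proof (induction a)
  case Zero
  then show ?case by simp
next
  case (Succ a)
  have "iter D (Succ a) (A \<union> B) \<subseteq> D (iter D a A \<union> iter D a B)"
    using Succ derivation_mono[OF assms(1)] by simp
  also have "\<dots> \<subseteq> D (iter D a A) \<union> D (iter D a B)"
    using derivation_Un_subset[OF assms(1)] closed_iter_subset[OF assms(1)] assms(2,3) by blast
  finally show ?case by simp
next
  case (Lim f)
  have "iter D (Lim f) (A \<union> B) \<subseteq> (\<Inter>n. iter D (f n) A \<union> iter D (f n) B)"
    using Lim by auto
  also have "\<dots> \<subseteq> (\<Inter>n. iter D (f n) A) \<union> (\<Inter>n. iter D (f n) B)"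
    by (rule INT_iter_Un_subset[OF assms(1,1,2,3)])
  finally show ?case by simp
qed

lemma derivation_iter: "derivation D \<Longrightarrow> derivation (iter D a)"
  by (rule derivationI) (simp_all add: iter_mono closed_iter_subset iter_Un_subset)

lemma derivation_id: "derivation id"
  by (rule derivationI) simp_all

lemma derivation_comp:
  assumes D: "derivation D" and E: "derivation E"
  shows "derivation (D \<circ> E)"
proof (rule derivationI)
  fix A B :: "'a set"
  show "A \<subseteq> B \<Longrightarrow> (D \<circ> E) A \<subseteq> (D \<circ> E) B"
    using derivation_mono[OF D derivation_mono[OF E]] by simp
  assume "closed A" "closed B"
  then have "D (E (A \<union> B)) \<subseteq> D (E A \<union> E B)"
    by (intro derivation_mono[OF D] derivation_Un_subset[OF E])
  also have "\<dots> \<subseteq> D (E A) \<union> D (E B)"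
    using \<open>closed A\<close> \<open>closed B\<close> by (intro derivation_Un_subset[OF D] derivation_closed[OF E])
  finally show "(D \<circ> E) (A \<union> B) \<subseteq> (D \<circ> E) A \<union> (D \<circ> E) B" by simp
next
  fix P :: "'a set"
  assume "closed P"
  then show "closed ((D \<circ> E) P)"
    by (simp add: derivation_closed[OF D] derivation_closed[OF E])
  show "(D \<circ> E) P \<subseteq> P"
    using derivation_subset[OF D derivation_closed[OF E \<open>closed P\<close>]]
      derivation_subset[OF E \<open>closed P\<close>] by simp
qed

lemma derivation_funpow: "derivation E \<Longrightarrow> derivation (E ^^ n)"
  by (induction n) (simp_all add: derivation_id derivation_comp)

lemma iter_ord_add: "iter D (ord_add a b) P = iter D b (iter D a P)"
  by (induction b) auto

lemma iter_ord_mult_nat_ord: "iter D (ord_mult a (nat_ord n)) P = (iter D a ^^ n) P"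
  by (induction n) (auto simp: iter_ord_add)

lemma iter_omega_pow_Succ: "iter D (omega_pow (Succ b)) P = (\<Inter>n. (iter D (omega_pow b) ^^ n) P)"
  by (simp add: omega_def iter_ord_mult_nat_ord)

lemma funpow_subset_Un_funpow:
  assumes E: "derivation E" and E\<^sub>1: "derivation E\<^sub>1" and E\<^sub>2: "derivation E\<^sub>2"
    and split: "\<And>P. closed P \<Longrightarrow> E P \<subseteq> E\<^sub>1 P \<union> E\<^sub>2 P"
    and "closed P"
  shows "(E ^^ (m + n)) P \<subseteq> (E\<^sub>1 ^^ m) P \<union> (E\<^sub>2 ^^ n) P"
  using \<open>closed P\<close>
proof (induction "m + n" arbitrary: m n P)
  case 0
  then show ?case by simp
next
  case (Suc k)
  have below: "(E ^^ j) Q \<subseteq> Q" if "closed Q" for j Q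
    using derivation_subset[OF derivation_funpow[OF E] that] .
  show ?case
  proof (cases "m = 0 \<or> n = 0")
    case True
    then show ?thesis using below[OF Suc.prems, of "m + n"] by auto
  next
    case False
    then obtain m' n' where m: "m = Suc m'" and n: "n = Suc n'"
      by (meson not0_implies_Suc)
    have c: "closed (E\<^sub>1 P)" "closed (E\<^sub>2 P)" "E\<^sub>1 P \<subseteq> P" "E\<^sub>2 P \<subseteq> P"
      using Suc.prems derivationD[OF E\<^sub>1] derivationD[OF E\<^sub>2] by auto
    note Ek = derivationD[OF derivation_funpow[OF E, of k]]
    have "(E ^^ (m + n)) P = (E ^^ k) (E P)"
      unfolding Suc.hyps(2)[symmetric] funpow_Suc_right by simp
    also have "\<dots> \<subseteq> (E ^^ k) (E\<^sub>1 P) \<union> (E ^^ k) (E\<^sub>2 P)"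
      using Ek(1)[OF split[OF Suc.prems]] Ek(4)[OF c(1,2)] by blast
    also have "(E ^^ k) (E\<^sub>1 P) \<subseteq> (E\<^sub>1 ^^ m') (E\<^sub>1 P) \<union> (E\<^sub>2 ^^ n) (E\<^sub>1 P)"
      using Suc.hyps(1)[of m' n] Suc.hyps(2) m c(1) by simp
    also have "\<dots> \<subseteq> (E\<^sub>1 ^^ m) P \<union> (E\<^sub>2 ^^ n) P"
      using derivation_mono[OF derivation_funpow[OF E\<^sub>2] c(3)] m
      by (auto simp: funpow_Suc_right simp del: funpow.simps)
    also have "(E ^^ k) (E\<^sub>2 P) \<subseteq> (E\<^sub>1 ^^ m) (E\<^sub>2 P) \<union> (E\<^sub>2 ^^ n') (E\<^sub>2 P)"
      using Suc.hyps(1)[of m n'] Suc.hyps(2) n c(2) by simp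
    also have "\<dots> \<subseteq> (E\<^sub>1 ^^ m) P \<union> (E\<^sub>2 ^^ n) P"
      using derivation_mono[OF derivation_funpow[OF E\<^sub>1] c(4)] n
      by (auto simp: funpow_Suc_right simp del: funpow.simps)
    finally show ?thesis by blast
  qed
qed

lemma iter_omega_pow_subset_Un:
  assumes D: "derivation D" and D\<^sub>1: "derivation D\<^sub>1" and D\<^sub>2: "derivation D\<^sub>2"
    and split: "\<And>P. closed P \<Longrightarrow> D P \<subseteq> D\<^sub>1 P \<union> D\<^sub>2 P"
    and "closed P"
  shows "iter D (omega_pow a) P \<subseteq> iter D\<^sub>1 (omega_pow a) P \<union> iter D\<^sub>2 (omega_pow a) P"
  using \<open>closed P\<close>
proof (induction a arbitrary: P)
  case Zero
  then show ?case using split by simp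
next
  case (Succ b)
  let ?c = "\<lambda>n. ord_mult (omega_pow b) (nat_ord n)"
  have "iter D (omega_pow (Succ b)) P \<subseteq> (iter D (omega_pow b) ^^ (n + n)) P" for n
    unfolding iter_omega_pow_Succ by blast
  also have "\<dots> n \<subseteq> iter D\<^sub>1 (?c n) P \<union> iter D\<^sub>2 (?c n) P" for n
    unfolding iter_ord_mult_nat_ord
    by (rule funpow_subset_Un_funpow[OF derivation_iter[OF D] derivation_iter[OF D\<^sub>1]
          derivation_iter[OF D\<^sub>2] Succ.IH Succ.prems])
  finally have "iter D (omega_pow (Succ b)) P \<subseteq> (\<Inter>n. iter D\<^sub>1 (?c n) P \<union> iter D\<^sub>2 (?c n) P)"
    by blast
  also have "\<dots> \<subseteq> (\<Inter>n. iter D\<^sub>1 (?c n) P) \<union> (\<Inter>n. iter D\<^sub>2 (?c n) P)"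
    by (rule INT_iter_Un_subset[OF D\<^sub>1 D\<^sub>2 Succ.prems Succ.prems])
  finally show ?case by (simp add: omega_def)
next
  case (Lim f)
  have "iter D (omega_pow (Lim f)) P
          \<subseteq> (\<Inter>n. iter D\<^sub>1 (omega_pow (f n)) P \<union> iter D\<^sub>2 (omega_pow (f n)) P)"
    using Lim by auto
  also have "\<dots> \<subseteq> (\<Inter>n. iter D\<^sub>1 (omega_pow (f n)) P) \<union> (\<Inter>n. iter D\<^sub>2 (omega_pow (f n)) P)"
    by (rule INT_iter_Un_subset[OF D\<^sub>1 D\<^sub>2 Lim.prems Lim.prems])
  finally show ?case by simp
qed

lemma osc_set_subset: "osc_set u v \<eta> A \<subseteq> A"
  unfolding osc_set_def by auto

lemma osc_set_mono: "A \<subseteq> B \<Longrightarrow> osc_set u v \<eta> A \<subseteq> osc_set u v \<eta> B"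
  unfolding osc_set_def by fastforce

lemma osc_set_nhdE:
  assumes "closed A" "x \<notin> osc_set u v \<eta> A"
  obtains U where "open U" "x \<in> U" "\<And>y. y \<in> U \<inter> A \<Longrightarrow> \<bar>v y - v x\<bar> * max \<bar>u y\<bar> \<bar>u x\<bar> < \<eta>"
proof (cases "x \<in> A")
  case True
  then show ?thesis using assms(2) that unfolding osc_set_def by (auto simp: not_le)
next
  case False
  then show ?thesis using assms(1) that[of "- A"] by auto
qed

lemma osc_set_Un_subset:
  assumes "closed A" "closed B"
  shows "osc_set u v \<eta> (A \<union> B) \<subseteq> osc_set u v \<eta> A \<union> osc_set u v \<eta> B"
proof (rule subsetI, rule ccontr)
  fix x
  assume x: "x \<in> osc_set u v \<eta> (A \<union> B)" and "x \<notin> osc_set u v \<eta> A \<union> osc_set u v \<eta> B"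
  then have "x \<notin> osc_set u v \<eta> A" "x \<notin> osc_set u v \<eta> B" by auto
  then obtain U\<^sub>A U\<^sub>B where U: "open U\<^sub>A" "x \<in> U\<^sub>A" "open U\<^sub>B" "x \<in> U\<^sub>B"
    and small_A: "\<And>y. y \<in> U\<^sub>A \<inter> A \<Longrightarrow> \<bar>v y - v x\<bar> * max \<bar>u y\<bar> \<bar>u x\<bar> < \<eta>"
    and small_B: "\<And>y. y \<in> U\<^sub>B \<inter> B \<Longrightarrow> \<bar>v y - v x\<bar> * max \<bar>u y\<bar> \<bar>u x\<bar> < \<eta>"
    using osc_set_nhdE[OF assms(1)] osc_set_nhdE[OF assms(2)] by metis
  have "open (U\<^sub>A \<inter> U\<^sub>B) \<and> x \<in> U\<^sub>A \<inter> U\<^sub>B"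
    using U by auto
  then obtain y where "y \<in> (U\<^sub>A \<inter> U\<^sub>B) \<inter> (A \<union> B)" "\<eta> \<le> \<bar>v y - v x\<bar> * max \<bar>u y\<bar> \<bar>u x\<bar>"
    using x unfolding osc_set_def by blast
  then show False
    using small_A[of y] small_B[of y] by auto
qed

lemma derivation_delta_u: "derivation (delta_u u v \<eta>)"
  unfolding delta_u_def
proof (rule derivationI)
  fix A B :: "'a set"
  show "A \<subseteq> B \<Longrightarrow> closure (osc_set u v \<eta> A) \<subseteq> closure (osc_set u v \<eta> B)"
    by (intro closure_mono osc_set_mono)
  assume "closed A" "closed B"
  then show "closure (osc_set u v \<eta> (A \<union> B))
               \<subseteq> closure (osc_set u v \<eta> A) \<union> closure (osc_set u v \<eta> B)"
    unfolding closure_Un[symmetric] by (intro closure_mono osc_set_Un_subset)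
next
  fix P :: "'a set"
  assume "closed P"
  then show "closure (osc_set u v \<eta> P) \<subseteq> P"
    by (intro closure_minimal osc_set_subset)
qed simp

lemma derivation_delta: "derivation (delta v \<eta>)"
  using derivation_delta_u unfolding delta_def[abs_def] .

lemma abs_mult_diff_le:
  fixes a b c d :: real
  shows "\<bar>a * b - c * d\<bar> \<le> \<bar>a - c\<bar> * max (\<bar>b\<bar>) (\<bar>d\<bar>) + \<bar>b - d\<bar> * max (\<bar>a\<bar>) (\<bar>c\<bar>)"
proof -
  have "\<bar>a * b - c * d\<bar> = \<bar>(a - c) * b + c * (b - d)\<bar>"
    by (simp add: algebra_simps)
  also have "\<dots> \<le> \<bar>a - c\<bar> * \<bar>b\<bar> + \<bar>b - d\<bar> * \<bar>c\<bar>"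
    by (metis abs_mult abs_triangle_ineq mult.commute)
  also have "\<dots> \<le> \<bar>a - c\<bar> * max (\<bar>b\<bar>) (\<bar>d\<bar>) + \<bar>b - d\<bar> * max (\<bar>a\<bar>) (\<bar>c\<bar>)"
    by (intro add_mono mult_left_mono) simp_all
  finally show ?thesis .
qed

lemma osc_set_mult_subset:
  "osc_set (\<lambda>_. 1) (\<lambda>x. g x * h x) \<epsilon> P \<subseteq> osc_set h g (\<epsilon>/2) P \<union> osc_set g h (\<epsilon>/2) P"
proof (rule subsetI, rule ccontr)
  fix x
  assume x: "x \<in> osc_set (\<lambda>_. 1) (\<lambda>x. g x * h x) \<epsilon> P"
    and "x \<notin> osc_set h g (\<epsilon>/2) P \<union> osc_set g h (\<epsilon>/2) P"
  then obtain U\<^sub>g U\<^sub>h where U: "open U\<^sub>g" "x \<in> U\<^sub>g" "open U\<^sub>h" "x \<in> U\<^sub>h"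
    and small_g: "\<And>y. y \<in> U\<^sub>g \<inter> P \<Longrightarrow> \<bar>g y - g x\<bar> * max \<bar>h y\<bar> \<bar>h x\<bar> < \<epsilon>/2"
    and small_h: "\<And>y. y \<in> U\<^sub>h \<inter> P \<Longrightarrow> \<bar>h y - h x\<bar> * max \<bar>g y\<bar> \<bar>g x\<bar> < \<epsilon>/2"
    unfolding osc_set_def by (auto simp: not_le)
  obtain y where "y \<in> (U\<^sub>g \<inter> U\<^sub>h) \<inter> P" "\<epsilon> \<le> \<bar>g y * h y - g x * h x\<bar>"
    using x U unfolding osc_set_def by (auto dest!: spec[of _ "U\<^sub>g \<inter> U\<^sub>h"])
  then show False
    using small_g[of y] small_h[of y] abs_mult_diff_le[of "g y" "h y" "g x" "h x"] by auto
qed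

lemma delta_mult_subset:
  "delta (\<lambda>x. g x * h x) \<epsilon> P \<subseteq> delta_u h g (\<epsilon>/2) P \<union> delta_u g h (\<epsilon>/2) P"
  unfolding delta_def delta_u_def closure_Un[symmetric] by (intro closure_mono osc_set_mult_subset)

theorem proposition4p4:
  fixes g h :: "'a::polish_space \<Rightarrow> real" and \<epsilon> :: real
  assumes "\<epsilon> > 0"
  shows "(\<forall>P. closed P \<longrightarrow>
            delta (\<lambda>x. g x * h x) \<epsilon> P
              \<subseteq> delta_u h g (\<epsilon>/2) P \<union> delta_u g h (\<epsilon>/2) P)
       \<and> (\<forall>P \<alpha>. closed P \<longrightarrow>
            iter (delta (\<lambda>x. g x * h x) \<epsilon>) (omega_pow \<alpha>) P
              \<subseteq> iter (delta_u h g (\<epsilon>/2)) (omega_pow \<alpha>) P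
                \<union> iter (delta_u g h (\<epsilon>/2)) (omega_pow \<alpha>) P)"
proof (intro conjI allI impI)
  fix P :: "'a set" and \<alpha>
  assume "closed P"
  then show "iter (delta (\<lambda>x. g x * h x) \<epsilon>) (omega_pow \<alpha>) P
              \<subseteq> iter (delta_u h g (\<epsilon>/2)) (omega_pow \<alpha>) P
                \<union> iter (delta_u g h (\<epsilon>/2)) (omega_pow \<alpha>) P"
    by (rule iter_omega_pow_subset_Un[OF derivation_delta derivation_delta_u derivation_delta_u
          delta_mult_subset])
qed (rule delta_mult_subset)

end
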